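(* Let $\mathcal{Q}\subset\mathbb{R}^n$ be compact and let $(\mathcal{E},\mathcal{D})$ be a compression code for $\mathcal{Q}$ operating at rate $r$ and distortion $\delta$, with codebook $\mathcal{C}$. Let $\eta>1$, $d=\frac{\eta r}{\log_2\frac1{{\rm e}\delta}}$, and suppose $\frac{\eta}{\log\frac1{{\rm e}\delta}}\le\epsilon'$ for some $\epsilon'>0$. Let $\beta=\sqrt{\log_2(1/({\rm e}\delta))}$. Let $A\in\mathbb{R}^{d\times n}$ have i.i.d. $\mathcal{N}(0,1)$ entries and let ${\bf z}\sim\mathcal{N}(0,\sigma^2I_d)$ be independent of $A$. For ${\bf x}_o\in\mathcal{Q}$ let $\hat{{\bf x}}_o$ be any element of $\arg\min_{{\bf c}\in\mathcal{C}}\|{\bf y}_o-A{\bf c}\|_2^2$ with ${\bf y}_o=A{\bf x}_o+{\bf z}$. Then for every ${\bf x}_o\in\mathcal{Q}$, \[ \|\hat{{\bf x}}_o-{\bf x}_o\|_2\le\frac{1}{({\rm e}\delta)^{(1+\epsilon')/\eta}}\Big(\frac{2\sigma\beta}{\sqrt\eta}+\sqrt{\frac{4\sigma^2\beta^2}{\eta}+2\delta^2+\frac{4\sigma\delta}{\sqrt\eta}}\Big) \] with probability exceeding \[ 1-2{\rm e}^{-\frac{0.15\eta r}{\log_2\frac1{{\rm e}\delta}}}-{\rm e}^{-\frac{r}{\log_2\frac1{{\rm e}\delta}}}-{\rm e}^{-0.3r}-{\rm e}^{-0.3\epsilon' r}. \]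
   Context: A compression code $(\mathcal{E},\mathcal{D})$ for $\mathcal{Q}$ at rate $r$ consists of an encoder $\mathcal{E}:\mathcal{Q}\to\{1,2,\dots,2^r\}$ and a decoder $\mathcal{D}:\{1,\dots,2^r\}\to\mathbb{R}^n$; its codebook is $\mathcal{C}=\{\mathcal{D}(\mathcal{E}({\bf x})):{\bf x}\in\mathcal{Q}\}$, and its distortion is $\delta=\sup_{{\bf x}\in\mathcal{Q}}\|{\bf x}-\mathcal{D}(\mathcal{E}({\bf x}))\|_2$. $\log$ is the natural logarithm, $\log_2$ the base-2 logarithm. The probability is over $A$ and ${\bf z}$. *)

theory Defs
  imports "HOL-Analysis.Analysis" "HOL-Probability.Probability"
begin

definition codebook :: "('v \<Rightarrow> nat) \<Rightarrow> (nat \<Rightarrow> 'v) \<Rightarrow> 'v set \<Rightarrow> 'v set" where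
  "codebook E D Q = (\<lambda>x. D (E x)) ` Q"

definition distortion :: "('v::real_normed_vector \<Rightarrow> nat) \<Rightarrow> (nat \<Rightarrow> 'v) \<Rightarrow> 'v set \<Rightarrow> real" where
  "distortion E D Q = (SUP x\<in>Q. norm (x - D (E x)))"

definition is_code :: "'v set \<Rightarrow> nat \<Rightarrow> ('v \<Rightarrow> nat) \<Rightarrow> (nat \<Rightarrow> 'v) \<Rightarrow> bool" where
  "is_code Q r E D \<longleftrightarrow> E ` Q \<subseteq> {1..2^r}"

definition ls_argmin :: "(real^'n) set \<Rightarrow> real^'n^'d \<Rightarrow> real^'d \<Rightarrow> (real^'n) set" where
  "ls_argmin C A y = {c \<in> C. \<forall>c'\<in>C. (norm (y - A *v c))\<^sup>2 \<le> (norm (y - A *v c'))\<^sup>2}"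

end

theory Submission
  imports Defs
begin

text \<open>Let \<open>c\<^sub>0 = D (E x\<^sub>o)\<close>, so \<open>v\<^sub>0 = x\<^sub>o - c\<^sub>0\<close> has norm at most \<open>\<delta>\<close>. For a codeword
  \<open>c\<close> and \<open>v = x\<^sub>o - c\<close> the least-squares residual is \<open>\<parallel>A v\<parallel>\<^sup>2 + 2 \<langle>A v, z\<rangle> + \<parallel>z\<parallel>\<^sup>2\<close>, so a
  minimiser far from \<open>x\<^sub>o\<close> must do no worse than \<open>c\<^sub>0\<close> in the first two terms. The coordinates
  of \<open>A v\<close> are independent \<open>\<N>(0, \<parallel>v\<parallel>\<^sup>2)\<close>, so Chernoff bounds give
  \<open>\<parallel>A v\<^sub>0\<parallel>\<^sup>2 \<le> 2 d \<delta>\<^sup>2\<close> and, for each far codeword, \<open>\<parallel>A v\<parallel>\<^sup>2 > \<kappa>\<^sup>2 d \<parallel>v\<parallel>\<^sup>2\<close> with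
  \<open>\<kappa> = (e\<delta>)\<^bsup>(1+\<epsilon>')/\<eta>\<^esup>\<close>; the cross terms are controlled the same way, since
  \<open>exp (b X Z - b\<^sup>2 \<sigma>\<^sup>2 X\<^sup>2 / 2)\<close> has mean one for independent \<open>X\<close> and \<open>Z \<sim> \<N>(0, \<sigma>\<^sup>2)\<close>. A union bound
  over the at most \<open>2\<^sup>r\<close> codewords costs a factor \<open>2\<^sup>r\<close>, which the choice of \<open>d\<close> and \<open>\<kappa>\<close>
  absorbs.\<close>

section \<open>Gaussian integrals and Chernoff bounds\<close>

lemma nn_integral_normal_density_exp_linear:
  fixes \<sigma> b :: real
  assumes "\<sigma> > 0"
  shows "(\<integral>\<^sup>+x. ennreal (normal_density 0 \<sigma> x) * ennreal (exp (b * x)) \<partial>lborel) = ennreal (exp (b\<^sup>2 * \<sigma>\<^sup>2 / 2))"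
proof -
  have shift: "normal_density 0 \<sigma> x * exp (b * x) = exp (b\<^sup>2 * \<sigma>\<^sup>2 / 2) * normal_density (b * \<sigma>\<^sup>2) \<sigma> x" for x
    using assms by (simp add: normal_density_def mult_exp_exp field_simps power2_eq_square)
  have "(\<integral>\<^sup>+x. ennreal (normal_density 0 \<sigma> x) * ennreal (exp (b * x)) \<partial>lborel)
     = (\<integral>\<^sup>+x. ennreal (exp (b\<^sup>2 * \<sigma>\<^sup>2 / 2)) * ennreal (normal_density (b * \<sigma>\<^sup>2) \<sigma> x) \<partial>lborel)"
    by (intro nn_integral_cong) (simp add: ennreal_mult'[symmetric] shift)
  also have "\<dots> = ennreal (exp (b\<^sup>2 * \<sigma>\<^sup>2 / 2)) * (\<integral>\<^sup>+x. ennreal (normal_density (b * \<sigma>\<^sup>2) \<sigma> x) \<partial>lborel)"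
    by (rule nn_integral_cmult) simp
  also have "(\<integral>\<^sup>+x. ennreal (normal_density (b * \<sigma>\<^sup>2) \<sigma> x) \<partial>lborel) = 1"
    using integrable_normal_density[OF assms] integral_normal_density[OF assms]
    by (subst nn_integral_eq_integral) auto
  finally show ?thesis by simp
qed

lemma nn_integral_normal_density_exp_square:
  fixes s c :: real
  assumes "s > 0" "2 * c * s\<^sup>2 < 1"
  shows "(\<integral>\<^sup>+x. ennreal (normal_density 0 s x) * ennreal (exp (c * x\<^sup>2)) \<partial>lborel) = ennreal (1 / sqrt (1 - 2 * c * s\<^sup>2))"
proof -
  define k where "k = 1 - 2 * c * s\<^sup>2"
  have k: "k > 0" using assms by (simp add: k_def)
  define s' where "s' = s / sqrt k"
  have s': "s' > 0" using k assms by (simp add: s'_def)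
  have rescale: "normal_density 0 s x * exp (c * x\<^sup>2) = (1 / sqrt k) * normal_density 0 s' x" for x
  proof -
    have "s'\<^sup>2 = s\<^sup>2 / k" using k by (simp add: s'_def power_divide)
    then have "normal_density 0 s' x = 1 / sqrt (2 * pi * (s\<^sup>2 / k)) * exp (-(x)\<^sup>2 / (2 * (s\<^sup>2 / k)))"
      by (simp add: normal_density_def)
    also have "\<dots> = sqrt k / sqrt (2 * pi * s\<^sup>2) * exp (-(x)\<^sup>2 * k / (2 * s\<^sup>2))"
      using k assms by (simp add: real_sqrt_divide field_simps)
    finally have "normal_density 0 s' x = sqrt k / sqrt (2 * pi * s\<^sup>2) * exp (-(x)\<^sup>2 * k / (2 * s\<^sup>2))" .
    moreover have "-(x)\<^sup>2 * k / (2 * s\<^sup>2) = -(x)\<^sup>2 / (2 * s\<^sup>2) + c * x\<^sup>2"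
      using assms by (simp add: k_def field_simps)
    ultimately show ?thesis
      using k by (simp add: normal_density_def mult_exp_exp algebra_simps)
  qed
  have "(\<integral>\<^sup>+x. ennreal (normal_density 0 s x) * ennreal (exp (c * x\<^sup>2)) \<partial>lborel)
     = (\<integral>\<^sup>+x. ennreal (1 / sqrt k) * ennreal (normal_density 0 s' x) \<partial>lborel)"
    using k by (intro nn_integral_cong) (simp add: ennreal_mult[symmetric] rescale)
  also have "\<dots> = ennreal (1 / sqrt k) * (\<integral>\<^sup>+x. ennreal (normal_density 0 s' x) \<partial>lborel)"
    by (rule nn_integral_cmult) simp
  also have "(\<integral>\<^sup>+x. ennreal (normal_density 0 s' x) \<partial>lborel) = 1"
    using integrable_normal_density[OF s'] integral_normal_density[OF s']
    by (subst nn_integral_eq_integral) auto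
  finally show ?thesis by (simp add: k_def)
qed

lemma (in prob_space) Chernoff_bound_sum_le:
  fixes X :: "'i \<Rightarrow> 'a \<Rightarrow> real"
  assumes I: "finite I" and indep: "indep_vars (\<lambda>_. borel) X I" and "l > 0"
    and mgf: "\<And>i. i \<in> I \<Longrightarrow> (\<integral>\<^sup>+\<omega>. ennreal (exp (- l * X i \<omega>)) \<partial>M) = ennreal (m i)"
    and m_nonneg: "\<And>i. i \<in> I \<Longrightarrow> m i \<ge> 0"
  shows "measure M {\<omega>\<in>space M. (\<Sum>i\<in>I. X i \<omega>) \<le> \<theta>} \<le> exp (l * \<theta>) * (\<Prod>i\<in>I. m i)"
proof -
  have rv: "\<And>i. i \<in> I \<Longrightarrow> X i \<in> borel_measurable M"
    using indep by (auto simp: indep_vars_def)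
  have "emeasure M {\<omega>\<in>space M. (\<Sum>i\<in>I. X i \<omega>) \<le> \<theta>}
      \<le> ennreal (exp (l * \<theta>)) * (\<integral>\<^sup>+\<omega>. ennreal (exp (- l * (\<Sum>i\<in>I. X i \<omega>))) * indicator (space M) \<omega> \<partial>M)"
    using rv by (intro Chernoff_ineq_nn_integral_le \<open>l > 0\<close>) auto
  also have "(\<integral>\<^sup>+\<omega>. ennreal (exp (- l * (\<Sum>i\<in>I. X i \<omega>))) * indicator (space M) \<omega> \<partial>M)
      = (\<integral>\<^sup>+\<omega>. (\<Prod>i\<in>I. ennreal (exp (- l * X i \<omega>))) \<partial>M)"
    using I by (intro nn_integral_cong) (simp add: sum_distrib_left exp_sum prod_ennreal)
  also have "\<dots> = (\<Prod>i\<in>I. ennreal (m i))"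
  proof -
    have "indep_vars (\<lambda>_. borel) (\<lambda>i \<omega>. ennreal (exp (- l * X i \<omega>))) I"
      by (rule indep_vars_compose2[OF indep]) auto
    then show ?thesis
      using mgf by (subst indep_vars_nn_integral[OF I]) (auto intro!: prod.cong)
  qed
  finally show ?thesis
    using m_nonneg by (simp add: emeasure_eq_measure prod_ennreal ennreal_mult'[symmetric] prod_nonneg)
qed

lemma (in prob_space) prob_ge_one_minus_union_bound:
  fixes p p' q q' :: real
  assumes "finite F" and "G \<in> events"
    and "space M - (B \<union> B' \<union> (\<Union>c\<in>F. P c \<union> P' c)) \<subseteq> G"
    and "B \<in> events" "B' \<in> events" "\<And>c. P c \<in> events" "\<And>c. P' c \<in> events"
    and "prob B \<le> p" "prob B' \<le> p'"
    and "\<And>c. c \<in> F \<Longrightarrow> prob (P c) \<le> q" "\<And>c. c \<in> F \<Longrightarrow> prob (P' c) \<le> q'"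
  shows "1 - (p + p' + card F * (q + q')) \<le> prob G"
proof -
  let ?U = "\<Union>c\<in>F. P c \<union> P' c"
  have U: "?U \<in> events" using assms by (intro sets.finite_UN sets.Un) auto
  have "prob ?U \<le> (\<Sum>c\<in>F. prob (P c \<union> P' c))"
    using assms by (intro measure_UNION_le sets.Un) auto
  also have "\<dots> \<le> (\<Sum>c\<in>F. q + q')"
    using assms by (intro sum_mono order.trans[OF measure_Un_le]) (auto intro: add_mono)
  finally have "prob ?U \<le> card F * (q + q')" by simp
  moreover have "prob (B \<union> B' \<union> ?U) \<le> prob B + prob B' + prob ?U"
    using assms U by (meson measure_Un_le add_mono order.trans order.refl sets.Un)
  moreover have "1 - prob (B \<union> B' \<union> ?U) \<le> prob G"
    using assms U by (subst prob_compl[symmetric]) (auto intro!: finite_measure_mono)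
  ultimately show ?thesis using assms by linarith
qed

lemma vec_borel_measurable_iff:
  fixes f :: "'a \<Rightarrow> real^'d"
  shows "f \<in> borel_measurable M \<longleftrightarrow> (\<forall>i. (\<lambda>x. f x $ i) \<in> borel_measurable M)"
proof
  assume "f \<in> borel_measurable M"
  then show "\<forall>i. (\<lambda>x. f x $ i) \<in> borel_measurable M"
    unfolding cart_eq_inner_axis by (intro allI borel_measurable_inner) auto
next
  assume components: "\<forall>i. (\<lambda>x. f x $ i) \<in> borel_measurable M"
  show "f \<in> borel_measurable M"
  proof (subst borel_measurable_euclidean_space, intro ballI)
    fix b :: "real^'d" assume "b \<in> Basis"
    then obtain i where "b = axis i 1" by (auto simp: Basis_vec_def)
    then show "(\<lambda>x. f x \<bullet> b) \<in> borel_measurable M"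
      using components by (simp add: inner_axis)
  qed
qed

lemma power2_norm_vec_eq_sum: "(norm (x :: real^'d))\<^sup>2 = (\<Sum>i\<in>UNIV. (x $ i)\<^sup>2)"
  by (simp add: norm_vec_def L2_set_def sum_nonneg)

section \<open>Gaussian measurement matrices\<close>

definition design_entries :: "('a \<Rightarrow> real^'n^'d) \<Rightarrow> ('a \<Rightarrow> real^'d) \<Rightarrow> ('d \<times> 'n) + 'd \<Rightarrow> 'a \<Rightarrow> real" where
  "design_entries A z k \<omega> = (case k of Inl (i, j) \<Rightarrow> A \<omega> $ i $ j | Inr i \<Rightarrow> z \<omega> $ i)"

lemma design_entries_Inl[simp]: "design_entries A z (Inl (i, j)) = (\<lambda>\<omega>. A \<omega> $ i $ j)"
  and design_entries_Inr[simp]: "design_entries A z (Inr i) = (\<lambda>\<omega>. z \<omega> $ i)"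
  by (simp_all add: design_entries_def fun_eq_iff)

locale gaussian_design = prob_space M for M :: "'a measure" +
  fixes A :: "'a \<Rightarrow> real^'n::finite^'d::finite" and z :: "'a \<Rightarrow> real^'d"
  assumes indep_entries: "indep_vars (\<lambda>_. borel) (design_entries A z) UNIV"
    and entry_std_normal: "\<And>i j. distributed M lborel (\<lambda>\<omega>. A \<omega> $ i $ j) (\<lambda>x. ennreal (std_normal_density x))"
begin

lemma design_entries_measurable: "design_entries A z k \<in> borel_measurable M"
  using indep_entries by (auto simp: indep_vars_def)

lemma entry_measurable[measurable]: "(\<lambda>\<omega>. A \<omega> $ i $ j) \<in> borel_measurable M"
  using design_entries_measurable[of "Inl (i, j)"] by simp

lemma noise_measurable[measurable]: "z \<in> borel_measurable M"
  using design_entries_measurable[of "Inr _"] by (simp add: vec_borel_measurable_iff)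

lemma mult_vec_measurable[measurable]: "(\<lambda>\<omega>. A \<omega> *v w) \<in> borel_measurable M"
  by (simp add: vec_borel_measurable_iff matrix_vector_mult_def)

lemma indep_vars_restrict_entries:
  assumes "disjoint_family_on K L"
    and "\<And>j. j \<in> L \<Longrightarrow> G j \<in> measurable (PiM (K j) (\<lambda>_. borel)) (N j)"
  shows "indep_vars N (\<lambda>j \<omega>. G j (restrict (\<lambda>k. design_entries A z k \<omega>) (K j))) L"
  using indep_vars_compose2[OF indep_vars_restrict[OF indep_entries, of L K], of G N] assms
  by auto

text \<open>Row \<open>i\<close> of \<open>A\<close> and coordinate \<open>i\<close> of \<open>z\<close> use disjoint sets of entries for distinct \<open>i\<close>.\<close>

lemma indep_vars_mult_vec_noise_components:
  assumes F: "\<And>i. case_prod (F i) \<in> borel_measurable (borel \<Otimes>\<^sub>M borel)"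
  shows "indep_vars (\<lambda>_. borel) (\<lambda>i \<omega>. F i ((A \<omega> *v w) $ i) (z \<omega> $ i)) UNIV"
proof -
  define K :: "'d \<Rightarrow> ('d \<times> 'n + 'd) set" where "K i = insert (Inr i) (range (\<lambda>j. Inl (i, j)))" for i
  define G where "G i = (\<lambda>f :: ('d \<times> 'n) + 'd \<Rightarrow> real. F i (\<Sum>j\<in>UNIV. f (Inl (i, j)) * w $ j) (f (Inr i)))"
    for i
  have "G i \<in> borel_measurable (PiM (K i) (\<lambda>_. borel))" for i
  proof -
    have "(\<lambda>f. ((\<Sum>j\<in>UNIV. f (Inl (i, j)) * w $ j), f (Inr i))) \<in> PiM (K i) (\<lambda>_. borel) \<rightarrow>\<^sub>M borel \<Otimes>\<^sub>M borel"
      by (intro measurable_Pair borel_measurable_sum borel_measurable_times measurable_component_singleton)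
        (auto simp: K_def)
    from measurable_compose[OF this F] show ?thesis by (simp add: G_def)
  qed
  then have "indep_vars (\<lambda>_. borel) (\<lambda>i \<omega>. G i (restrict (\<lambda>k. design_entries A z k \<omega>) (K i))) UNIV"
    by (intro indep_vars_restrict_entries) (auto simp: disjoint_family_on_def K_def)
  also have "(\<lambda>i \<omega>. G i (restrict (\<lambda>k. design_entries A z k \<omega>) (K i))) = (\<lambda>i \<omega>. F i ((A \<omega> *v w) $ i) (z \<omega> $ i))"
    by (auto simp: G_def K_def matrix_vector_mult_def design_entries_def intro!: ext)
  finally show ?thesis .
qed

lemma indep_var_mult_vec_component_noise:
  "indep_var lborel (\<lambda>\<omega>. (A \<omega> *v w) $ i) lborel (\<lambda>\<omega>. z \<omega> $ i)"
proof -
  define K :: "bool \<Rightarrow> ('d \<times> 'n + 'd) set" where "K b = (if b then range (\<lambda>j. Inl (i, j)) else {Inr i})" for b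
  define G where "G b = (\<lambda>f :: ('d \<times> 'n) + 'd \<Rightarrow> real. if b then \<Sum>j\<in>UNIV. f (Inl (i, j)) * w $ j else f (Inr i))"
    for b
  have "G b \<in> measurable (PiM (K b) (\<lambda>_. borel)) (case_bool lborel lborel b)" for b
    unfolding G_def K_def
    by (cases b) (auto intro!: borel_measurable_sum borel_measurable_times measurable_component_singleton)
  then have "indep_vars (case_bool lborel lborel) (\<lambda>b \<omega>. G b (restrict (\<lambda>k. design_entries A z k \<omega>) (K b))) UNIV"
    by (intro indep_vars_restrict_entries) (auto simp: disjoint_family_on_def K_def)
  also have "(\<lambda>b \<omega>. G b (restrict (\<lambda>k. design_entries A z k \<omega>) (K b))) = case_bool (\<lambda>\<omega>. (A \<omega> *v w) $ i) (\<lambda>\<omega>. z \<omega> $ i)"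
    by (auto simp: G_def K_def matrix_vector_mult_def design_entries_def intro!: ext split: bool.split)
  finally show ?thesis unfolding indep_var_def .
qed

lemma distributed_mult_vec_component:
  assumes "w \<noteq> 0"
  shows "distributed M lborel (\<lambda>\<omega>. (A \<omega> *v w) $ i) (\<lambda>x. ennreal (normal_density 0 (norm w) x))"
proof -
  define J where "J = {j. w $ j \<noteq> 0}"
  have J: "finite J" "J \<noteq> {}"
    using assms by (auto simp: J_def vec_eq_iff)
  define X where "X = (\<lambda>j \<omega>. w $ j * A \<omega> $ i $ j)"
  have "indep_vars (\<lambda>_. borel) (\<lambda>j \<omega>. (\<lambda>f. w $ j * f (Inl (i, j))) (restrict (\<lambda>k. design_entries A z k \<omega>) {Inl (i, j)})) J"
    by (intro indep_vars_restrict_entries)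
      (auto simp: disjoint_family_on_def intro!: borel_measurable_times measurable_component_singleton)
  then have indep: "indep_vars (\<lambda>_. borel) X J"
    by (simp add: X_def)
  have "distributed M lborel (X j) (\<lambda>x. ennreal (normal_density 0 \<bar>w $ j\<bar> x))" if "j \<in> J" for j
    using normal_density_affine[OF entry_std_normal[of i j], of "w $ j" 0] that
    by (simp add: X_def J_def)
  then have "distributed M lborel (\<lambda>\<omega>. \<Sum>j\<in>J. X j \<omega>) (normal_density (\<Sum>j\<in>J. 0) (sqrt (\<Sum>j\<in>J. \<bar>w $ j\<bar>\<^sup>2)))"
    using J by (intro sum_indep_normal[OF _ _ indep]) (auto simp: J_def)
  moreover have "(\<Sum>j\<in>J. X j \<omega>) = (A \<omega> *v w) $ i" for \<omega>
    unfolding X_def matrix_vector_mult_def mult.commute[of "w $ _"]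
    by simp (rule sum.mono_neutral_left, auto simp: J_def)
  moreover have "sqrt (\<Sum>j\<in>J. \<bar>w $ j\<bar>\<^sup>2) = norm w"
  proof -
    have "(\<Sum>j\<in>J. \<bar>w $ j\<bar>\<^sup>2) = (\<Sum>j\<in>UNIV. \<bar>w $ j\<bar>\<^sup>2)"
      by (rule sum.mono_neutral_left) (auto simp: J_def)
    then show ?thesis by (simp add: norm_vec_def L2_set_def)
  qed
  ultimately show ?thesis by simp
qed

lemma nn_integral_exp_square_mult_vec_component:
  assumes "w \<noteq> 0" and "2 * c * (norm w)\<^sup>2 < 1"
  shows "(\<integral>\<^sup>+\<omega>. ennreal (exp (c * ((A \<omega> *v w) $ i)\<^sup>2)) \<partial>M) = ennreal (1 / sqrt (1 - 2 * c * (norm w)\<^sup>2))"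
  using assms
  by (subst distributed_nn_integral[OF distributed_mult_vec_component[OF assms(1)], symmetric])
    (auto intro!: nn_integral_normal_density_exp_square)

lemma prob_norm_mult_vec_ge:
  assumes "w \<noteq> 0"
  shows "measure M {\<omega>\<in>space M. 2 * real CARD('d) * (norm w)\<^sup>2 \<le> (norm (A \<omega> *v w))\<^sup>2}
           \<le> exp (- real CARD('d) / 2) * sqrt 2 ^ CARD('d)"
proof -
  let ?s = "norm w" and ?l = "1 / (4 * (norm w)\<^sup>2)"
  have s: "?s > 0" using assms by simp
  have indep: "indep_vars (\<lambda>_. borel) (\<lambda>i \<omega>. - ((A \<omega> *v w) $ i)\<^sup>2) UNIV"
    using indep_vars_mult_vec_noise_components[of "\<lambda>i a b. - a\<^sup>2" w] by simp
  have "(\<integral>\<^sup>+\<omega>. ennreal (exp (- ?l * - ((A \<omega> *v w) $ i)\<^sup>2)) \<partial>M) = ennreal (1 / sqrt (1 - 2 * ?l * ?s\<^sup>2))" for i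
    using nn_integral_exp_square_mult_vec_component[OF assms, of ?l] s by simp
  also have "1 / sqrt (1 - 2 * ?l * ?s\<^sup>2) = sqrt 2"
    using s by (simp add: real_sqrt_divide)
  finally have "measure M {\<omega>\<in>space M. (\<Sum>i\<in>UNIV. - ((A \<omega> *v w) $ i)\<^sup>2) \<le> - 2 * real CARD('d) * ?s\<^sup>2}
      \<le> exp (?l * (- 2 * real CARD('d) * ?s\<^sup>2)) * (\<Prod>i\<in>(UNIV::'d set). sqrt 2)"
    using s by (intro Chernoff_bound_sum_le indep) auto
  also have "?l * (- 2 * real CARD('d) * ?s\<^sup>2) = - real CARD('d) / 2"
    using s by (simp add: field_simps)
  also have "{\<omega>\<in>space M. (\<Sum>i\<in>UNIV. - ((A \<omega> *v w) $ i)\<^sup>2) \<le> - 2 * real CARD('d) * ?s\<^sup>2}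
      = {\<omega>\<in>space M. 2 * real CARD('d) * ?s\<^sup>2 \<le> (norm (A \<omega> *v w))\<^sup>2}"
    by (auto simp: power2_norm_vec_eq_sum sum_negf)
  finally show ?thesis by simp
qed

lemma prob_norm_mult_vec_gt:
  fixes \<delta> :: real
  assumes "norm w \<le> \<delta>"
  shows "measure M {\<omega>\<in>space M. 2 * real CARD('d) * \<delta>\<^sup>2 < (norm (A \<omega> *v w))\<^sup>2}
           \<le> exp (- real CARD('d) / 2) * sqrt 2 ^ CARD('d)"
proof (cases "w = 0")
  case False
  have "2 * real CARD('d) * (norm w)\<^sup>2 \<le> 2 * real CARD('d) * \<delta>\<^sup>2"
    using assms by (intro mult_left_mono power_mono) auto
  then have "2 * real CARD('d) * (norm w)\<^sup>2 \<le> (norm (A \<omega> *v w))\<^sup>2"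
    if "2 * real CARD('d) * \<delta>\<^sup>2 < (norm (A \<omega> *v w))\<^sup>2" for \<omega>
    using that by linarith
  then have "{\<omega>\<in>space M. 2 * real CARD('d) * \<delta>\<^sup>2 < (norm (A \<omega> *v w))\<^sup>2}
      \<subseteq> {\<omega>\<in>space M. 2 * real CARD('d) * (norm w)\<^sup>2 \<le> (norm (A \<omega> *v w))\<^sup>2}"
    by blast
  then show ?thesis
    by (intro order.trans[OF finite_measure_mono prob_norm_mult_vec_ge[OF False]]) measurable
next
  case True
  have empty: "{\<omega>\<in>space M. 2 * real CARD('d) * \<delta>\<^sup>2 < (norm (A \<omega> *v w))\<^sup>2} = {}"
    using True by (simp add: not_less)
  show ?thesis unfolding empty by simp
qed

lemma prob_norm_mult_vec_le:
  fixes k :: real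
  assumes "w \<noteq> 0" and "0 < k" "k < 1"
  shows "measure M {\<omega>\<in>space M. (norm (A \<omega> *v w))\<^sup>2 \<le> k * real CARD('d) * (norm w)\<^sup>2}
           \<le> exp (real CARD('d) / 2) * sqrt k ^ CARD('d)"
proof -
  let ?s = "norm w"
  define l where "l = (1 / k - 1) / (2 * ?s\<^sup>2)"
  have s: "?s > 0" using assms by simp
  have l: "l > 0" using assms s by (simp add: l_def field_simps)
  have indep: "indep_vars (\<lambda>_. borel) (\<lambda>i \<omega>. ((A \<omega> *v w) $ i)\<^sup>2) UNIV"
    using indep_vars_mult_vec_noise_components[of "\<lambda>i a b. a\<^sup>2" w] by simp
  have "0 < 2 * l * ?s\<^sup>2" using l s by simp
  then have "2 * - l * ?s\<^sup>2 < 1" by linarith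
  then have "(\<integral>\<^sup>+\<omega>. ennreal (exp (- l * ((A \<omega> *v w) $ i)\<^sup>2)) \<partial>M) = ennreal (1 / sqrt (1 - 2 * - l * ?s\<^sup>2))" for i
    by (rule nn_integral_exp_square_mult_vec_component[OF assms(1)])
  also have "1 / sqrt (1 - 2 * - l * ?s\<^sup>2) = sqrt k"
    using assms s by (simp add: l_def field_simps real_sqrt_divide)
  finally have "measure M {\<omega>\<in>space M. (\<Sum>i\<in>UNIV. ((A \<omega> *v w) $ i)\<^sup>2) \<le> k * real CARD('d) * ?s\<^sup>2}
      \<le> exp (l * (k * real CARD('d) * ?s\<^sup>2)) * (\<Prod>i\<in>(UNIV::'d set). sqrt k)"
    using l assms by (intro Chernoff_bound_sum_le indep) auto
  also have "\<dots> = exp (l * (k * real CARD('d) * ?s\<^sup>2)) * sqrt k ^ CARD('d)"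
    by simp
  also have "\<dots> \<le> exp (real CARD('d) / 2) * sqrt k ^ CARD('d)"
    using assms s by (intro mult_right_mono) (simp_all add: l_def field_simps)
  finally show ?thesis
    by (simp add: power2_norm_vec_eq_sum)
qed

end

text \<open>The noiseless case \<open>\<sigma> = 0\<close> is stated as \<open>z = 0\<close> almost surely, since
  \<open>normal_density 0 0\<close> is not a probability density.\<close>

locale noisy_gaussian_design = gaussian_design M A z
  for M :: "'a measure" and A :: "'a \<Rightarrow> real^'n::finite^'d::finite" and z :: "'a \<Rightarrow> real^'d" +
  fixes \<sigma> :: real
  assumes noise_level_nonneg: "0 \<le> \<sigma>"
    and noise_normal: "\<sigma> > 0 \<Longrightarrow> (\<And>i. distributed M lborel (\<lambda>\<omega>. z \<omega> $ i) (\<lambda>x. ennreal (normal_density 0 \<sigma> x)))"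
    and noise_zero: "\<sigma> = 0 \<Longrightarrow> (AE \<omega> in M. z \<omega> = 0)"
begin

text \<open>Integrating out the noise coordinate turns \<open>exp (b x y)\<close> into \<open>exp (b\<^sup>2 \<sigma>\<^sup>2 x\<^sup>2 / 2)\<close>,
  which the choice of \<open>c\<close> cancels exactly.\<close>

lemma nn_integral_exp_cross_term:
  assumes "\<sigma> > 0" and "w \<noteq> 0" and "c + b\<^sup>2 * \<sigma>\<^sup>2 / 2 = 0"
  shows "(\<integral>\<^sup>+\<omega>. ennreal (exp (b * (A \<omega> *v w) $ i * z \<omega> $ i + c * ((A \<omega> *v w) $ i)\<^sup>2)) \<partial>M) = 1"
proof -
  let ?s = "norm w"
  have s: "?s > 0" using assms by simp
  have joint: "distributed M (lborel \<Otimes>\<^sub>M lborel) (\<lambda>\<omega>. ((A \<omega> *v w) $ i, z \<omega> $ i))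
     (\<lambda>(x, y). ennreal (normal_density 0 ?s x) * ennreal (normal_density 0 \<sigma> y))"
    by (rule distributed_joint_indep[OF sigma_finite_lborel sigma_finite_lborel
          distributed_mult_vec_component[OF assms(2)] noise_normal[OF assms(1)]
          indep_var_mult_vec_component_noise])
  define g where "g = (\<lambda>(x::real, y::real). ennreal (exp (b * x * y + c * x\<^sup>2)))"
  have "(\<integral>\<^sup>+\<omega>. ennreal (exp (b * (A \<omega> *v w) $ i * z \<omega> $ i + c * ((A \<omega> *v w) $ i)\<^sup>2)) \<partial>M)
     = (\<integral>\<^sup>+p. (case p of (x, y) \<Rightarrow> ennreal (normal_density 0 ?s x) * ennreal (normal_density 0 \<sigma> y)) * g p \<partial>(lborel \<Otimes>\<^sub>M lborel))"
    unfolding g_def by (subst distributed_nn_integral[OF joint]) (simp_all add: case_prod_beta)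
  also have "\<dots> = (\<integral>\<^sup>+x. \<integral>\<^sup>+y. ennreal (normal_density 0 ?s x) * ennreal (normal_density 0 \<sigma> y) * g (x, y) \<partial>lborel \<partial>lborel)"
    unfolding g_def by (subst lborel.nn_integral_fst[symmetric]) (auto simp: case_prod_beta)
  also have "\<dots> = (\<integral>\<^sup>+x. ennreal (normal_density 0 ?s x) \<partial>lborel)"
  proof (intro nn_integral_cong)
    fix x :: real
    have "(\<integral>\<^sup>+y. ennreal (normal_density 0 ?s x) * ennreal (normal_density 0 \<sigma> y) * g (x, y) \<partial>lborel)
       = (\<integral>\<^sup>+y. ennreal (normal_density 0 ?s x * exp (c * x\<^sup>2)) * (ennreal (normal_density 0 \<sigma> y) * ennreal (exp ((b * x) * y))) \<partial>lborel)"
      by (intro nn_integral_cong)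
        (simp add: g_def mult_exp_exp ennreal_mult'[symmetric] ennreal_mult[symmetric] algebra_simps)
    also have "\<dots> = ennreal (normal_density 0 ?s x * exp (c * x\<^sup>2)) * ennreal (exp ((b * x)\<^sup>2 * \<sigma>\<^sup>2 / 2))"
      by (subst nn_integral_cmult) (simp_all add: nn_integral_normal_density_exp_linear[OF assms(1)])
    also have "\<dots> = ennreal (normal_density 0 ?s x * exp ((c + b\<^sup>2 * \<sigma>\<^sup>2 / 2) * x\<^sup>2))"
      by (simp add: ennreal_mult[symmetric] mult.assoc mult_exp_exp algebra_simps power_mult_distrib)
    finally show "(\<integral>\<^sup>+y. ennreal (normal_density 0 ?s x) * ennreal (normal_density 0 \<sigma> y) * g (x, y) \<partial>lborel)
        = ennreal (normal_density 0 ?s x)"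
      using assms(3) by simp
  qed
  also have "\<dots> = 1"
    using integrable_normal_density[OF s] integral_normal_density[OF s]
    by (subst nn_integral_eq_integral) auto
  finally show ?thesis .
qed

lemma prob_cross_term_lt:
  assumes "0 \<le> \<tau>" "0 < x"
  shows "measure M {\<omega>\<in>space M. 2 * ((A \<omega> *v w) \<bullet> z \<omega>) + \<sigma> * \<tau> / x * (norm (A \<omega> *v w))\<^sup>2 < - (\<sigma> * \<tau> * x)}
           \<le> exp (- \<tau>\<^sup>2 / 2)"
    (is "measure M {\<omega>\<in>space M. ?P \<omega>} \<le> _")
proof -
  consider "\<sigma> = 0" | "w = 0" | "\<tau> = 0" | "\<sigma> > 0" "w \<noteq> 0" "\<tau> > 0"
    using noise_level_nonneg \<open>0 \<le> \<tau>\<close> by fastforce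
  then show ?thesis
  proof cases
    case 1
    then have "AE \<omega> in M. \<not> ?P \<omega>"
      using noise_zero by (auto elim: AE_mp)
    from prob_eq_0_AE[OF this] show ?thesis by simp
  next
    case 2
    then have "{\<omega>\<in>space M. ?P \<omega>} = {}"
      using assms noise_level_nonneg by (auto simp: not_less)
    then show ?thesis by (metis exp_ge_zero measure_empty)
  next
    case 3
    then show ?thesis by (simp add: prob_le_1)
  next
    case 4
    define \<mu> where "\<mu> = \<sigma> * \<tau> / x"
    define l where "l = \<mu> / (2 * \<sigma>\<^sup>2)"
    have l: "l > 0" using assms 4 by (simp add: l_def \<mu>_def)
    let ?X = "\<lambda>i \<omega>. 2 * (A \<omega> *v w) $ i * z \<omega> $ i + \<mu> * ((A \<omega> *v w) $ i)\<^sup>2"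
    have indep: "indep_vars (\<lambda>_. borel) ?X UNIV"
      using indep_vars_mult_vec_noise_components[of "\<lambda>i a b. 2 * a * b + \<mu> * a\<^sup>2" w] by simp
    have "(\<integral>\<^sup>+\<omega>. ennreal (exp (- l * ?X i \<omega>)) \<partial>M)
        = (\<integral>\<^sup>+\<omega>. ennreal (exp ((- 2 * l) * (A \<omega> *v w) $ i * z \<omega> $ i + (- l * \<mu>) * ((A \<omega> *v w) $ i)\<^sup>2)) \<partial>M)" for i
      by (simp add: algebra_simps)
    also have "\<dots> i = ennreal 1" for i
      using 4 by (subst nn_integral_exp_cross_term) (auto simp: l_def field_simps power2_eq_square)
    finally have "measure M {\<omega>\<in>space M. (\<Sum>i\<in>UNIV. ?X i \<omega>) \<le> - (\<sigma> * \<tau> * x)}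
        \<le> exp (l * - (\<sigma> * \<tau> * x)) * (\<Prod>i\<in>(UNIV::'d set). 1)"
      by (intro Chernoff_bound_sum_le indep l) auto
    also have "l * - (\<sigma> * \<tau> * x) = - \<tau>\<^sup>2 / 2"
      using assms 4 by (simp add: l_def \<mu>_def field_simps power2_eq_square)
    finally have "measure M {\<omega>\<in>space M. (\<Sum>i\<in>UNIV. ?X i \<omega>) \<le> - (\<sigma> * \<tau> * x)} \<le> exp (- \<tau>\<^sup>2 / 2)"
      by simp
    moreover have "(\<Sum>i\<in>UNIV. ?X i \<omega>) = 2 * ((A \<omega> *v w) \<bullet> z \<omega>) + \<mu> * (norm (A \<omega> *v w))\<^sup>2" for \<omega>
      by (simp add: inner_vec_def power2_norm_vec_eq_sum sum.distrib sum_distrib_left mult.assoc)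
    ultimately show ?thesis
      unfolding \<mu>_def by (elim order.trans[rotated], intro finite_measure_mono) auto
  qed
qed

end

section \<open>Least-squares decoding over a codebook\<close>

lemma finite_codebook: "is_code Q r E D \<Longrightarrow> finite (codebook E D Q)"
  by (rule finite_subset[of _ "D ` {1..2^r}"]) (auto simp: codebook_def is_code_def)

lemma card_codebook_le: "is_code Q r E D \<Longrightarrow> card (codebook E D Q) \<le> 2 ^ r"
proof -
  assume "is_code Q r E D"
  then have "card (codebook E D Q) \<le> card (D ` {1..2^r})"
    by (intro card_mono) (auto simp: codebook_def is_code_def)
  also have "\<dots> \<le> 2 ^ r"
    using card_image_le[of "{1..(2::nat)^r}" D] by simp
  finally show ?thesis .
qed

lemma norm_sub_code_le_distortion:
  fixes Q :: "'v::real_normed_vector set"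
  assumes "bounded Q" "is_code Q r E D" "x \<in> Q"
  shows "norm (x - D (E x)) \<le> distortion E D Q"
proof -
  obtain B where B: "\<And>y. y \<in> Q \<Longrightarrow> norm y \<le> B"
    using assms(1) by (auto simp: bounded_iff)
  obtain B' where B': "\<And>c. c \<in> D ` {1..2^r} \<Longrightarrow> norm c \<le> B'"
    using finite_imp_bounded[of "D ` {1..2^r}"] by (auto simp: bounded_iff)
  have "norm (y - D (E y)) \<le> B + B'" if "y \<in> Q" for y
    using norm_triangle_ineq4[of y "D (E y)"] B[OF that] B'[of "D (E y)"] that assms(2)
    by (force simp: is_code_def)
  then have "bdd_above ((\<lambda>x. norm (x - D (E x))) ` Q)"
    by (intro bdd_aboveI2)
  then show ?thesis
    unfolding distortion_def using assms(3) by (rule cSUP_upper2) simp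
qed

lemma power2_norm_add: "(norm (x + y :: 'a::real_inner))\<^sup>2 = (norm x)\<^sup>2 + 2 * (x \<bullet> y) + (norm y)\<^sup>2"
  by (simp add: power2_norm_eq_inner inner_add inner_commute)

text \<open>The role of \<open>\<sigma> \<tau> / t\<close>: the cross term may eat this fraction of the signal \<open>S \<ge> t\<^sup>2\<close>,
  and \<open>t\<close> is large enough that what remains still exceeds \<open>R\<close>.\<close>

lemma signal_margin:
  fixes \<sigma> \<tau> t R S X :: real
  assumes "0 \<le> \<sigma>" "0 \<le> \<tau>" "0 \<le> R"
    and t: "\<sigma> * \<tau> + sqrt (\<sigma>\<^sup>2 * \<tau>\<^sup>2 + R) < t" and S: "t\<^sup>2 \<le> S"
    and X: "- (\<sigma> * \<tau> * t) \<le> 2 * X + \<sigma> * \<tau> / t * S"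
  shows "R < S + 2 * X"
proof -
  define \<mu> where "\<mu> = \<sigma> * \<tau> / t"
  have st: "0 \<le> \<sigma> * \<tau>" using assms by simp
  have root: "0 \<le> sqrt (\<sigma>\<^sup>2 * \<tau>\<^sup>2 + R)" using assms by simp
  then have "\<sigma> * \<tau> < t" using t by linarith
  then have "t > 0" "\<mu> < 1" using st by (simp_all add: \<mu>_def)
  have "(sqrt (\<sigma>\<^sup>2 * \<tau>\<^sup>2 + R))\<^sup>2 < (t - \<sigma> * \<tau>)\<^sup>2"
    using t root by (intro power_strict_mono) auto
  then have "R < t\<^sup>2 - 2 * \<sigma> * \<tau> * t"
    using assms by (simp add: power2_eq_square algebra_simps)
  also have "t\<^sup>2 - 2 * \<sigma> * \<tau> * t = (1 - \<mu>) * t\<^sup>2 - \<sigma> * \<tau> * t"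
    using \<open>t > 0\<close> by (simp add: \<mu>_def power2_eq_square field_simps)
  also have "\<dots> \<le> (1 - \<mu>) * S - \<sigma> * \<tau> * t"
    using \<open>\<mu> < 1\<close> S by simp
  also have "\<dots> \<le> S + 2 * X"
    using X by (simp add: \<mu>_def algebra_simps)
  finally show ?thesis .
qed

lemma signal_bound:
  fixes a y S X :: real
  assumes "0 \<le> a" "0 < y" "S \<le> y\<^sup>2" "- (a * y) \<le> - 2 * X + a / y * S"
  shows "S + 2 * X \<le> y\<^sup>2 + 2 * a * y"
proof -
  have "a / y * S \<le> a / y * y\<^sup>2"
    using assms by (intro mult_left_mono) auto
  also have "\<dots> = a * y"
    using \<open>0 < y\<close> by (simp add: power2_eq_square)
  finally show ?thesis using assms by linarith
qed

lemma ls_argmin_norm_le: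
  fixes \<Phi> :: "real^'n^'d"
  assumes c: "c \<in> ls_argmin C \<Phi> (\<Phi> *v x + e)" and "c0 \<in> C"
    and "0 \<le> \<sigma>" "0 \<le> \<tau>" "0 \<le> \<tau>0" "0 < y" "0 < s"
    and b: "s * b = \<sigma> * \<tau> + sqrt (\<sigma>\<^sup>2 * \<tau>\<^sup>2 + (y\<^sup>2 + 2 * (\<sigma> * \<tau>0) * y))"
    and near_signal: "(norm (\<Phi> *v (x - c0)))\<^sup>2 \<le> y\<^sup>2"
    and near_cross: "- (\<sigma> * \<tau>0 * y) \<le> 2 * ((\<Phi> *v (c0 - x)) \<bullet> e) + \<sigma> * \<tau>0 / y * (norm (\<Phi> *v (c0 - x)))\<^sup>2"
    and far_signal: "\<And>c. c \<in> C \<Longrightarrow> b < norm (x - c) \<Longrightarrow> (s * norm (x - c))\<^sup>2 \<le> (norm (\<Phi> *v (x - c)))\<^sup>2"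
    and far_cross: "\<And>c. c \<in> C \<Longrightarrow> b < norm (x - c) \<Longrightarrow>
      - (\<sigma> * \<tau> * (s * norm (x - c))) \<le> 2 * ((\<Phi> *v (x - c)) \<bullet> e) + \<sigma> * \<tau> / (s * norm (x - c)) * (norm (\<Phi> *v (x - c)))\<^sup>2"
  shows "norm (c - x) \<le> b"
proof (rule ccontr)
  assume "\<not> norm (c - x) \<le> b"
  then have far: "b < norm (x - c)" by (simp add: norm_minus_commute)
  have "c \<in> C" using c by (simp add: ls_argmin_def)
  have residual: "(norm (\<Phi> *v x + e - \<Phi> *v c'))\<^sup>2
      = (norm (\<Phi> *v (x - c')))\<^sup>2 + 2 * ((\<Phi> *v (x - c')) \<bullet> e) + (norm e)\<^sup>2" for c'
  proof -
    have "\<Phi> *v x + e - \<Phi> *v c' = \<Phi> *v (x - c') + e"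
      by (simp add: matrix_vector_mult_diff_distrib)
    then show ?thesis by (metis power2_norm_add)
  qed
  have "\<Phi> *v (c0 - x) = - (\<Phi> *v (x - c0))"
    by (simp add: matrix_vector_mult_diff_distrib)
  then have "(norm (\<Phi> *v (x - c0)))\<^sup>2 + 2 * ((\<Phi> *v (x - c0)) \<bullet> e) \<le> y\<^sup>2 + 2 * (\<sigma> * \<tau>0) * y"
    using near_signal near_cross assms(3,5,6) by (intro signal_bound) auto
  also have "\<dots> < (norm (\<Phi> *v (x - c)))\<^sup>2 + 2 * ((\<Phi> *v (x - c)) \<bullet> e)"
  proof (rule signal_margin)
    show "\<sigma> * \<tau> + sqrt (\<sigma>\<^sup>2 * \<tau>\<^sup>2 + (y\<^sup>2 + 2 * (\<sigma> * \<tau>0) * y)) < s * norm (x - c)"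
      using mult_strict_left_mono[OF far \<open>0 < s\<close>] b by simp
  qed (use far_signal far_cross \<open>c \<in> C\<close> far assms(3-6) in auto)
  finally have "(norm (\<Phi> *v x + e - \<Phi> *v c0))\<^sup>2 < (norm (\<Phi> *v x + e - \<Phi> *v c))\<^sup>2"
    by (simp add: residual)
  then show False
    using c \<open>c0 \<in> C\<close> by (auto simp: ls_argmin_def not_le[symmetric])
qed

context gaussian_design
begin

lemma sets_ls_argmin_all:
  assumes "finite C"
  shows "{\<omega>\<in>space M. \<forall>c\<in>ls_argmin C (A \<omega>) (A \<omega> *v x + z \<omega>). P c} \<in> sets M"
proof -
  have "{\<omega>\<in>space M. \<forall>c\<in>ls_argmin C (A \<omega>) (A \<omega> *v x + z \<omega>). P c}
    = {\<omega>\<in>space M. \<forall>c\<in>C. (\<forall>c'\<in>C. (norm (A \<omega> *v x + z \<omega> - A \<omega> *v c))\<^sup>2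
                                   \<le> (norm (A \<omega> *v x + z \<omega> - A \<omega> *v c'))\<^sup>2) \<longrightarrow> P c}"
    by (auto simp: ls_argmin_def)
  also have "\<dots> \<in> sets M"
    using assms by measurable
  finally show ?thesis .
qed

end

context noisy_gaussian_design
begin

lemma prob_ls_argmin_near:
  fixes C :: "(real^'n) set"
  defines "d \<equiv> real CARD('d)"
  assumes C: "finite C" "c0 \<in> C" and "norm (x - c0) \<le> \<delta>" "0 < \<delta>"
    and \<kappa>: "0 < \<kappa>" "\<kappa> < 1" and "0 \<le> \<tau>" "0 \<le> \<tau>0"
    and radius: "\<kappa> * sqrt d * b = \<sigma> * \<tau> + sqrt (\<sigma>\<^sup>2 * \<tau>\<^sup>2 + 2 * d * \<delta>\<^sup>2 + 2 * \<sigma> * \<tau>0 * (sqrt (2 * d) * \<delta>))"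
  shows "1 - (exp (- d / 2) * sqrt 2 ^ CARD('d) + exp (- \<tau>0\<^sup>2 / 2)
             + card C * (exp (d / 2) * \<kappa> ^ CARD('d) + exp (- \<tau>\<^sup>2 / 2)))
         \<le> measure M {\<omega>\<in>space M. \<forall>c\<in>ls_argmin C (A \<omega>) (A \<omega> *v x + z \<omega>). norm (c - x) \<le> b}"
proof -
  define y where "y = sqrt (2 * d) * \<delta>"
  define s where "s = \<kappa> * sqrt d"
  define t where "t c = s * norm (x - c)" for c
  define F where "F = {c\<in>C. b < norm (x - c)}"
  define Bad_near where "Bad_near = {\<omega>\<in>space M. 2 * d * \<delta>\<^sup>2 < (norm (A \<omega> *v (x - c0)))\<^sup>2}"
  define Bad_near_cross where "Bad_near_cross = {\<omega>\<in>space M. 2 * ((A \<omega> *v (c0 - x)) \<bullet> z \<omega>)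
      + \<sigma> * \<tau>0 / y * (norm (A \<omega> *v (c0 - x)))\<^sup>2 < - (\<sigma> * \<tau>0 * y)}"
  define Bad_far where "Bad_far c = {\<omega>\<in>space M. (norm (A \<omega> *v (x - c)))\<^sup>2 \<le> \<kappa>\<^sup>2 * d * (norm (x - c))\<^sup>2}" for c
  define Bad_far_cross where "Bad_far_cross c = {\<omega>\<in>space M. 2 * ((A \<omega> *v (x - c)) \<bullet> z \<omega>)
      + \<sigma> * \<tau> / t c * (norm (A \<omega> *v (x - c)))\<^sup>2 < - (\<sigma> * \<tau> * t c)}" for c
  have d: "1 \<le> d" by (simp add: d_def Suc_le_eq)
  have y: "0 < y" "y\<^sup>2 = 2 * d * \<delta>\<^sup>2"
    using d \<open>0 < \<delta>\<close> by (simp_all add: y_def power_mult_distrib)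
  have s: "0 < s" "s\<^sup>2 = \<kappa>\<^sup>2 * d"
    using d \<kappa> by (simp_all add: s_def power_mult_distrib)
  have "0 \<le> s * b"
    using radius noise_level_nonneg \<open>0 \<le> \<tau>\<close> \<open>0 \<le> \<tau>0\<close> \<open>0 < \<delta>\<close> d by (simp add: s_def)
  then have "0 \<le> b" using s by (simp add: zero_le_mult_iff)
  then have far: "c \<in> F \<Longrightarrow> x - c \<noteq> 0 \<and> 0 < t c" for c
    using s by (auto simp: F_def t_def intro!: mult_pos_pos)
  have good: "space M - (Bad_near \<union> Bad_near_cross \<union> (\<Union>c\<in>F. Bad_far c \<union> Bad_far_cross c))
      \<subseteq> {\<omega>\<in>space M. \<forall>c\<in>ls_argmin C (A \<omega>) (A \<omega> *v x + z \<omega>). norm (c - x) \<le> b}"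
  proof (safe)
    fix \<omega> c assume \<omega>: "\<omega> \<in> space M" "\<omega> \<notin> Bad_near" "\<omega> \<notin> Bad_near_cross" "\<omega> \<notin> (\<Union>c\<in>F. Bad_far c \<union> Bad_far_cross c)"
      and c: "c \<in> ls_argmin C (A \<omega>) (A \<omega> *v x + z \<omega>)"
    show "norm (c - x) \<le> b"
    proof (rule ls_argmin_norm_le[OF c \<open>c0 \<in> C\<close> noise_level_nonneg \<open>0 \<le> \<tau>\<close> \<open>0 \<le> \<tau>0\<close> y(1) s(1)])
      show "s * b = \<sigma> * \<tau> + sqrt (\<sigma>\<^sup>2 * \<tau>\<^sup>2 + (y\<^sup>2 + 2 * (\<sigma> * \<tau>0) * y))"
        using radius[folded y_def] y(2) by (simp add: s_def algebra_simps)
    qed (use \<omega> s y in \<open>auto simp: Bad_near_def Bad_near_cross_def Bad_far_def Bad_far_cross_def F_def t_def not_less power_mult_distrib\<close>)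
  qed
  have "1 - (exp (- d / 2) * sqrt 2 ^ CARD('d) + exp (- \<tau>0\<^sup>2 / 2)
             + card F * (exp (d / 2) * \<kappa> ^ CARD('d) + exp (- \<tau>\<^sup>2 / 2)))
         \<le> measure M {\<omega>\<in>space M. \<forall>c\<in>ls_argmin C (A \<omega>) (A \<omega> *v x + z \<omega>). norm (c - x) \<le> b}"
  proof (rule prob_ge_one_minus_union_bound[OF _ sets_ls_argmin_all good])
    show "prob Bad_near \<le> exp (- d / 2) * sqrt 2 ^ CARD('d)"
      using prob_norm_mult_vec_gt[OF \<open>norm (x - c0) \<le> \<delta>\<close>] by (simp add: Bad_near_def d_def)
    show "prob Bad_near_cross \<le> exp (- \<tau>0\<^sup>2 / 2)"
      unfolding Bad_near_cross_def by (rule prob_cross_term_lt) (use y \<open>0 \<le> \<tau>0\<close> in auto)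
    show "prob (Bad_far c) \<le> exp (d / 2) * \<kappa> ^ CARD('d)" if "c \<in> F" for c
      using prob_norm_mult_vec_le[of "x - c" "\<kappa>\<^sup>2"] far[OF that] \<kappa>
      by (simp add: Bad_far_def d_def power_less_one_iff)
    show "prob (Bad_far_cross c) \<le> exp (- \<tau>\<^sup>2 / 2)" if "c \<in> F" for c
      unfolding Bad_far_cross_def by (rule prob_cross_term_lt) (use far[OF that] \<open>0 \<le> \<tau>\<close> in auto)
  qed (use C in \<open>auto simp: Bad_near_def Bad_near_cross_def Bad_far_def Bad_far_cross_def F_def\<close>)
  moreover have "card F \<le> card C"
    using C by (intro card_mono) (auto simp: F_def)
  ultimately show ?thesis
    using \<kappa> by (elim order.trans[rotated]) (auto intro!: mult_right_mono)
qed

end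

section \<open>Numerical estimates\<close>

lemma sqrt_2_pow_eq_exp: "sqrt 2 ^ n = exp (real n * ln 2 / 2)"
  by (simp add: powr_half_sqrt[symmetric] powr_realpow[symmetric] powr_powr powr_def)

lemma two_pow_eq_exp: "(2::real) ^ n = exp (real n * ln 2)"
  by (simp add: exp_of_nat_mult)

lemma exp_neg_half_mult_sqrt_2_pow_le: "exp (- real n / 2) * sqrt 2 ^ n \<le> exp (- 0.15 * real n)"
proof -
  have "real n * ln 2 \<le> real n * (25 / 36)"
    using ln2_le_25_over_36 by (intro mult_left_mono) auto
  then show ?thesis
    by (simp add: sqrt_2_pow_eq_exp mult_exp_exp)
qed

lemma two_pow_mult_exp_le: "2 ^ r * exp (- 2 * real r) \<le> exp (- 0.3 * real r)"
proof -
  have "real r * ln 2 \<le> real r * (25 / 36)"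
    using ln2_le_25_over_36 by (intro mult_left_mono) auto
  then show ?thesis
    by (simp add: two_pow_eq_exp mult_exp_exp)
qed

lemma two_pow_mult_exp_mult_powr_pow_le:
  fixes q \<eta> \<epsilon>' :: real and n r :: nat
  assumes "0 < q" "q < 1" "0 < \<eta>" "0 \<le> \<epsilon>'"
    and dim: "real n * log 2 (1 / q) = \<eta> * r" and "\<eta> / ln (1 / q) \<le> \<epsilon>'"
  shows "2 ^ r * (exp (real n / 2) * (q powr ((1 + \<epsilon>') / \<eta>)) ^ n) \<le> exp (- 0.3 * \<epsilon>' * real r)"
proof -
  have lnq: "0 < ln (1 / q)" using assms by simp
  have dim': "real n * ln (1 / q) = \<eta> * r * ln 2"
    using dim by (simp add: log_def field_simps)
  have "(q powr ((1 + \<epsilon>') / \<eta>)) ^ n = exp (- ((1 + \<epsilon>') * r * ln 2))"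
  proof -
    have "(q powr ((1 + \<epsilon>') / \<eta>)) ^ n = exp (- ((1 + \<epsilon>') / \<eta> * (real n * ln (1 / q))))"
      using \<open>0 < q\<close> by (simp add: powr_def exp_of_nat_mult[symmetric] ln_div mult_ac)
    also have "\<dots> = exp (- ((1 + \<epsilon>') * r * ln 2))"
      using \<open>0 < \<eta>\<close> by (simp add: dim')
    finally show ?thesis .
  qed
  then have "2 ^ r * (exp (real n / 2) * (q powr ((1 + \<epsilon>') / \<eta>)) ^ n) = exp (n / 2 - \<epsilon>' * r * ln 2)"
    by (simp add: two_pow_eq_exp mult_exp_exp algebra_simps)
  also have "\<dots> \<le> exp (- 0.3 * \<epsilon>' * real r)"
  proof -
    have "real n = \<eta> / ln (1 / q) * (r * ln 2)"
      using dim' lnq by (simp add: field_simps)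
    also have "\<dots> \<le> \<epsilon>' * (r * ln 2)"
      using assms by (intro mult_right_mono) auto
    finally have "real n \<le> \<epsilon>' * (r * ln 2)" .
    moreover have "\<epsilon>' * r * 0.6 \<le> \<epsilon>' * r * ln 2"
      using assms ln2_ge_two_thirds by (intro mult_left_mono) auto
    ultimately show ?thesis by simp
  qed
  finally show ?thesis .
qed

lemma failure_probability_lt:
  fixes q \<eta> \<epsilon>' :: real and n r N :: nat
  defines "L \<equiv> log 2 (1 / q)"
  assumes "0 < q" "q < 1" "0 < \<eta>" "0 < \<epsilon>'"
    and dim: "real n * L = \<eta> * r" and "\<eta> / ln (1 / q) \<le> \<epsilon>'" and "N \<le> 2 ^ r"
  shows "exp (- real n / 2) * sqrt 2 ^ n + exp (- (sqrt (2 * real n / \<eta>))\<^sup>2 / 2)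
      + real N * (exp (real n / 2) * (q powr ((1 + \<epsilon>') / \<eta>)) ^ n + exp (- (2 * sqrt r)\<^sup>2 / 2))
    < 2 * exp (- 0.15 * \<eta> * r / L) + exp (- r / L) + exp (- 0.3 * r) + exp (- 0.3 * \<epsilon>' * real r)"
proof -
  have "0 < L" using assms by (simp add: L_def)
  let ?X = "exp (real n / 2) * (q powr ((1 + \<epsilon>') / \<eta>)) ^ n"
  have "real N \<le> 2 ^ r"
    using \<open>N \<le> 2 ^ r\<close> by (metis of_nat_le_iff of_nat_numeral of_nat_power)
  moreover have "(2 * sqrt r)\<^sup>2 / 2 = 2 * real r"
    by (simp add: power_mult_distrib)
  ultimately have "N * (?X + exp (- (2 * sqrt r)\<^sup>2 / 2)) \<le> 2 ^ r * ?X + 2 ^ r * exp (- 2 * real r)"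
    by (simp add: distrib_left[symmetric] mult_right_mono)
  also have "\<dots> \<le> exp (- 0.3 * \<epsilon>' * real r) + exp (- 0.3 * r)"
    using two_pow_mult_exp_mult_powr_pow_le[OF \<open>0 < q\<close> \<open>q < 1\<close> \<open>0 < \<eta>\<close> _ dim[unfolded L_def]] assms
      two_pow_mult_exp_le[of r]
    by (intro add_mono) auto
  finally have "N * (?X + exp (- (2 * sqrt r)\<^sup>2 / 2)) \<le> exp (- 0.3 * \<epsilon>' * real r) + exp (- 0.3 * r)" .
  moreover have "exp (- (sqrt (2 * real n / \<eta>))\<^sup>2 / 2) = exp (- r / L)"
    using dim \<open>0 < \<eta>\<close> \<open>0 < L\<close> by (simp add: field_simps)
  moreover have "exp (- real n / 2) * sqrt 2 ^ n \<le> exp (- 0.15 * \<eta> * r / L)"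
  proof -
    have "- 0.15 * real n = - 0.15 * \<eta> * r / L"
      using dim \<open>0 < L\<close> by (simp add: field_simps)
    then show ?thesis using exp_neg_half_mult_sqrt_2_pow_le[of n] by metis
  qed
  moreover have "0 < exp (- 0.15 * \<eta> * r / L)" by simp
  ultimately show ?thesis by linarith
qed

lemma scaled_radius_eq:
  fixes \<kappa> \<eta> L \<sigma> \<delta> d r :: real
  assumes "0 < \<kappa>" "0 < \<eta>" "0 \<le> d" "0 \<le> L" "0 \<le> r" and dim: "d * L = \<eta> * r"
  shows "\<kappa> * sqrt d * (1 / \<kappa> * (2 * \<sigma> * sqrt L / sqrt \<eta> + sqrt (4 * \<sigma>\<^sup>2 * (sqrt L)\<^sup>2 / \<eta> + 2 * \<delta>\<^sup>2 + 4 * \<sigma> * \<delta> / sqrt \<eta>)))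
    = \<sigma> * (2 * sqrt r) + sqrt (\<sigma>\<^sup>2 * (2 * sqrt r)\<^sup>2 + 2 * d * \<delta>\<^sup>2 + 2 * \<sigma> * sqrt (2 * d / \<eta>) * (sqrt (2 * d) * \<delta>))"
proof -
  have "sqrt d * sqrt L = sqrt \<eta> * sqrt r"
    using dim by (simp add: real_sqrt_mult[symmetric])
  then have linear: "sqrt d * (2 * \<sigma> * sqrt L / sqrt \<eta>) = \<sigma> * (2 * sqrt r)"
    using assms by (simp add: field_simps)
  have root: "sqrt (2 * d / \<eta>) * (sqrt (2 * d) * \<delta>) = 2 * d * \<delta> / sqrt \<eta>"
    using assms by (simp add: real_sqrt_divide real_sqrt_mult[symmetric])
  have "d * (4 * \<sigma>\<^sup>2 * (sqrt L)\<^sup>2 / \<eta> + 2 * \<delta>\<^sup>2 + 4 * \<sigma> * \<delta> / sqrt \<eta>)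
      = 4 * \<sigma>\<^sup>2 * (d * L) / \<eta> + 2 * d * \<delta>\<^sup>2 + 2 * \<sigma> * (2 * d * \<delta> / sqrt \<eta>)"
    using assms by (simp add: field_simps)
  also have "\<dots> = \<sigma>\<^sup>2 * (2 * sqrt r)\<^sup>2 + 2 * d * \<delta>\<^sup>2 + 2 * \<sigma> * sqrt (2 * d / \<eta>) * (sqrt (2 * d) * \<delta>)"
    using assms unfolding mult.assoc[of "2 * \<sigma>"] root by (simp add: dim power_mult_distrib)
  finally have "d * (4 * \<sigma>\<^sup>2 * (sqrt L)\<^sup>2 / \<eta> + 2 * \<delta>\<^sup>2 + 4 * \<sigma> * \<delta> / sqrt \<eta>)
      = \<sigma>\<^sup>2 * (2 * sqrt r)\<^sup>2 + 2 * d * \<delta>\<^sup>2 + 2 * \<sigma> * sqrt (2 * d / \<eta>) * (sqrt (2 * d) * \<delta>)" .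
  then have "sqrt d * sqrt (4 * \<sigma>\<^sup>2 * (sqrt L)\<^sup>2 / \<eta> + 2 * \<delta>\<^sup>2 + 4 * \<sigma> * \<delta> / sqrt \<eta>)
      = sqrt (\<sigma>\<^sup>2 * (2 * sqrt r)\<^sup>2 + 2 * d * \<delta>\<^sup>2 + 2 * \<sigma> * sqrt (2 * d / \<eta>) * (sqrt (2 * d) * \<delta>))"
    by (simp add: real_sqrt_mult[symmetric])
  with linear show ?thesis
    using \<open>0 < \<kappa>\<close> by (simp add: distrib_left)
qed

theorem theorem4:
  fixes M :: "'a measure"
    and Q :: "(real^'n) set"
    and E :: "real^'n \<Rightarrow> nat" and D :: "nat \<Rightarrow> real^'n"
    and r :: nat and \<delta> \<eta> \<epsilon>' \<sigma> :: real
    and A :: "'a \<Rightarrow> real^'n^'d" and z :: "'a \<Rightarrow> real^'d"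
  assumes "compact Q"
    and "is_code Q r E D"
    and "\<delta> = distortion E D Q"
    and "0 < \<delta>" and "exp 1 * \<delta> < 1"
    and "\<eta> > 1"
    and "real CARD('d) = \<eta> * r / log 2 (1 / (exp 1 * \<delta>))"
    and "\<epsilon>' > 0" and "\<eta> / ln (1 / (exp 1 * \<delta>)) \<le> \<epsilon>'"
    and "\<sigma> \<ge> 0"
    and "prob_space M"
    and "prob_space.indep_vars M (\<lambda>_. borel)
           (\<lambda>k \<omega>. case k of Inl (i, j) \<Rightarrow> A \<omega> $ i $ j | Inr i \<Rightarrow> z \<omega> $ i) UNIV"
    and "\<And>i j. distributed M lborel (\<lambda>\<omega>. A \<omega> $ i $ j) (\<lambda>x. ennreal (std_normal_density x))"
    and "\<sigma> > 0 \<Longrightarrow> (\<And>i. distributed M lborel (\<lambda>\<omega>. z \<omega> $ i) (\<lambda>x. ennreal (normal_density 0 \<sigma> x)))"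
    and "\<sigma> = 0 \<Longrightarrow> (AE \<omega> in M. z \<omega> = 0)"
    and "xo \<in> Q"
  shows "let \<beta> = sqrt (log 2 (1 / (exp 1 * \<delta>)));
             L = log 2 (1 / (exp 1 * \<delta>));
             C = codebook E D Q;
             bnd = (1 / (exp 1 * \<delta>) powr ((1 + \<epsilon>') / \<eta>)) *
                   (2 * \<sigma> * \<beta> / sqrt \<eta> +
                    sqrt (4 * \<sigma>\<^sup>2 * \<beta>\<^sup>2 / \<eta> + 2 * \<delta>\<^sup>2 + 4 * \<sigma> * \<delta> / sqrt \<eta>))
         in measure M {\<omega> \<in> space M.
                \<forall>xhat \<in> ls_argmin C (A \<omega>) (A \<omega> *v xo + z \<omega>). norm (xhat - xo) \<le> bnd}
            > 1 - 2 * exp (- 0.15 * \<eta> * r / L) - exp (- r / L) - exp (- 0.3 * r)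
                - exp (- 0.3 * \<epsilon>' * r)"
proof -
  have "design_entries A z = (\<lambda>k \<omega>. case k of Inl (i, j) \<Rightarrow> A \<omega> $ i $ j | Inr i \<Rightarrow> z \<omega> $ i)"
    by (simp add: design_entries_def fun_eq_iff)
  then interpret noisy_gaussian_design M A z \<sigma>
    using assms(10-15)
    by (simp add: noisy_gaussian_design_def noisy_gaussian_design_axioms_def
        gaussian_design_def gaussian_design_axioms_def)
  define q where "q = exp 1 * \<delta>"
  define L where "L = log 2 (1 / q)"
  define \<kappa> where "\<kappa> = q powr ((1 + \<epsilon>') / \<eta>)"
  define C where "C = codebook E D Q"
  define b where "b = 1 / \<kappa> * (2 * \<sigma> * sqrt L / sqrt \<eta>
    + sqrt (4 * \<sigma>\<^sup>2 * (sqrt L)\<^sup>2 / \<eta> + 2 * \<delta>\<^sup>2 + 4 * \<sigma> * \<delta> / sqrt \<eta>))"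
  define p where "p = exp (- real CARD('d) / 2) * sqrt 2 ^ CARD('d) + exp (- (sqrt (2 * real CARD('d) / \<eta>))\<^sup>2 / 2)
    + card C * (exp (real CARD('d) / 2) * \<kappa> ^ CARD('d) + exp (- (2 * sqrt r)\<^sup>2 / 2))"
  have q: "0 < q" "q < 1" using assms(4,5) by (simp_all add: q_def)
  then have "0 < L" by (simp add: L_def)
  have dim: "real CARD('d) * L = \<eta> * r"
    using assms(7) \<open>0 < L\<close> by (simp add: L_def q_def)
  have \<kappa>: "0 < \<kappa>" "\<kappa> < 1"
    using q assms(6,8) powr_less_mono2[of "(1 + \<epsilon>') / \<eta>" q 1] by (simp_all add: \<kappa>_def)
  have "D (E xo) \<in> C" using assms(16) by (simp add: C_def codebook_def)
  moreover have "norm (xo - D (E xo)) \<le> \<delta>"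
    using norm_sub_code_le_distortion[OF compact_imp_bounded] assms(1-3,16) by simp
  moreover have "\<kappa> * sqrt (real CARD('d)) * b = \<sigma> * (2 * sqrt r) + sqrt (\<sigma>\<^sup>2 * (2 * sqrt r)\<^sup>2
      + 2 * real CARD('d) * \<delta>\<^sup>2 + 2 * \<sigma> * sqrt (2 * real CARD('d) / \<eta>) * (sqrt (2 * real CARD('d)) * \<delta>))"
    unfolding b_def using assms(6) \<kappa> dim \<open>0 < L\<close> by (intro scaled_radius_eq) auto
  ultimately have "1 - p \<le> measure M {\<omega>\<in>space M. \<forall>c\<in>ls_argmin C (A \<omega>) (A \<omega> *v xo + z \<omega>). norm (c - xo) \<le> b}"
    using assms(2,4,6) \<kappa> unfolding p_def
    by (intro prob_ls_argmin_near) (auto simp: C_def finite_codebook)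
  moreover have "p < 2 * exp (- 0.15 * \<eta> * r / L) + exp (- r / L) + exp (- 0.3 * r) + exp (- 0.3 * \<epsilon>' * r)"
    using q assms(2,6,8,9) dim unfolding p_def \<kappa>_def L_def q_def
    by (intro failure_probability_lt) (auto simp: C_def card_codebook_le)
  ultimately show ?thesis
    unfolding Let_def C_def L_def b_def \<kappa>_def q_def by linarith
qed

end
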